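(* Let $X$ be an $\mathrm{OA}(N,k,2,t_1)$ and $Y$ an $\mathrm{OA}(N,k,2,t_2)$, both with symbols from $\{-1,1\}$, with strengths $t_1\ge1$ and $t_2\ge1$. Then $X$ and $Y$ are OD-equivalent if and only if the multiset of rows of $X$ equals the multiset of rows of $g(Y)$ for some $g\in G(k)^{\rm OD}$.
   Context: An $\mathrm{OA}(N,k,s,t)$ with $t\in\{0,\dots,k\}$ is an $N\times k$ array over an $s$-element symbol set such that in every $N\times t$ subarray each of the $s^t$ possible $t$-tuples appears exactly $N/s^t$ times as a row. Two $N\times k$ arrays $Y_1,Y_2$ over $\{-1,1\}$ are Hadamard equivalent if $Y_2=P_1D_1Y_1D_2P_2$ for permutation matrices $P_1,P_2$ and diagonal $\pm1$ matrices $D_1,D_2$ (i.e. obtained by signed permutations of rows and columns). $X_1,X_2$ are OD-equivalent if $[\mathbf{1},X_1]$ and $[\mathbf{1},X_2]$ are Hadamard equivalent. $G(k)^{\rm OD}$ is the group of permutations of $\{-1,1\}^k$ generated by coordinate permutations, sign changes of single coordinates, and $R_i(z_1,\dots,z_k)=(z_1z_i,\dots,z_{i-1}z_i,z_i,z_{i+1}z_i,\dots,z_kz_i)$ for $i=1,\dots,k$; it acts on arrays row by row. *)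

theory Defs
  imports "HOL-Library.Multiset" "HOL-Combinatorics.Permutations"
begin

text \<open>Arrays over the symbol set {-1,1}: an N x k array is a list of N rows,
  each row an int list of length k. Indices are 0-based.\<close>

definition pm1_array :: "nat \<Rightarrow> nat \<Rightarrow> int list list \<Rightarrow> bool" where
  "pm1_array N k X \<longleftrightarrow> length X = N \<and>
     (\<forall>r\<in>set X. length r = k \<and> set r \<subseteq> {-1, 1})"

definition is_OA :: "nat \<Rightarrow> nat \<Rightarrow> nat \<Rightarrow> int list list \<Rightarrow> bool" where
  "is_OA N k t X \<longleftrightarrow> pm1_array N k X \<and> t \<le> k \<and>
     (\<forall>cs v. distinct cs \<and> length cs = t \<and> set cs \<subseteq> {..<k} \<and>
             length v = t \<and> set v \<subseteq> {-1, 1} \<longrightarrow>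
        card {i. i < N \<and> map (\<lambda>c. X ! i ! c) cs = v} * 2 ^ t = N)"

definition hadamard_equiv :: "nat \<Rightarrow> nat \<Rightarrow> int list list \<Rightarrow> int list list \<Rightarrow> bool" where
  "hadamard_equiv N k Y1 Y2 \<longleftrightarrow>
     (\<exists>\<sigma> \<tau> (a :: nat \<Rightarrow> int) (b :: nat \<Rightarrow> int).
        \<sigma> permutes {..<N} \<and> \<tau> permutes {..<k} \<and>
        (\<forall>i<N. a i \<in> {-1, 1}) \<and> (\<forall>j<k. b j \<in> {-1, 1}) \<and>
        (\<forall>i<N. \<forall>j<k. Y2 ! i ! j = a (\<sigma> i) * Y1 ! (\<sigma> i) ! (\<tau> j) * b (\<tau> j)))"

definition OD_equiv :: "nat \<Rightarrow> nat \<Rightarrow> int list list \<Rightarrow> int list list \<Rightarrow> bool" where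
  "OD_equiv N k X1 X2 \<longleftrightarrow>
     hadamard_equiv N (Suc k) (map (\<lambda>r. 1 # r) X1) (map (\<lambda>r. 1 # r) X2)"

definition coord_perm :: "nat \<Rightarrow> (nat \<Rightarrow> nat) \<Rightarrow> int list \<Rightarrow> int list" where
  "coord_perm k \<pi> z = map (\<lambda>j. z ! \<pi> j) [0..<k]"

definition sign_change :: "nat \<Rightarrow> int list \<Rightarrow> int list" where
  "sign_change i z = z[i := - (z ! i)]"

definition R_map :: "nat \<Rightarrow> nat \<Rightarrow> int list \<Rightarrow> int list" where
  "R_map k i z = map (\<lambda>j. if j = i then z ! i else z ! j * z ! i) [0..<k]"

text \<open>All generators are bijections of the finite
  set {-1,1}^k whose inverses are again generators, so the generated monoid
  (closure of id under composition with generators) is the generated group.\<close>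

inductive_set G_OD :: "nat \<Rightarrow> (int list \<Rightarrow> int list) set" for k :: nat where
  G_id: "id \<in> G_OD k"
| G_perm: "g \<in> G_OD k \<Longrightarrow> \<pi> permutes {..<k} \<Longrightarrow> coord_perm k \<pi> \<circ> g \<in> G_OD k"
| G_sign: "g \<in> G_OD k \<Longrightarrow> i < k \<Longrightarrow> sign_change i \<circ> g \<in> G_OD k"
| G_R: "g \<in> G_OD k \<Longrightarrow> i < k \<Longrightarrow> R_map k i \<circ> g \<in> G_OD k"

end

theory Submission
  imports Defs
begin

(* Prepending the all-ones column turns OD-equivalence of X and Y into Hadamard equivalence of
   [1,X] and [1,Y]. Coordinate permutations and sign changes act on [1,z] as signed column
   permutations fixing column 0, and R_i acts as the swap of column 0 with the column of
   coordinate i followed by the row sign z_i; with row permutations this gives the "if" direction.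
   Conversely, in a Hadamard equivalence with column permutation tau, column tau(0) of [1,X] is
   sent to the all-ones column, which forces every row sign to be the corresponding entry of that
   column. Applying the R map that brings column tau(0) to the front therefore leaves a signed
   coordinate permutation, which lies in G(k)^OD, and the row permutation only reorders the
   multiset of rows. *)

definition pm1_row :: "nat \<Rightarrow> int list \<Rightarrow> bool" where
  "pm1_row k z \<longleftrightarrow> length z = k \<and> set z \<subseteq> {-1, 1}"

lemma pm1_array_iff: "pm1_array N k X \<longleftrightarrow> length X = N \<and> (\<forall>z\<in>set X. pm1_row k z)"
  by (auto simp: pm1_array_def pm1_row_def)

lemma pm1_row_iff_nth: "pm1_row k z \<longleftrightarrow> length z = k \<and> (\<forall>j<k. z ! j \<in> {-1, 1})"
  by (auto simp: pm1_row_def set_conv_nth)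

lemma pm1_row_nth: "pm1_row k z \<Longrightarrow> j < k \<Longrightarrow> z ! j \<in> {-1, 1}"
  by (simp add: pm1_row_iff_nth)

lemma pm1_row_Cons_one_nth: "pm1_row k z \<Longrightarrow> p < Suc k \<Longrightarrow> (1 # z) ! p \<in> {-1, 1}"
  using pm1_row_nth[of k z] by (cases p) auto

lemma pm1_array_nth: "pm1_array N k X \<Longrightarrow> i < N \<Longrightarrow> pm1_row k (X ! i)"
  by (simp add: pm1_array_iff)

lemma pm1_row_map_upt: "pm1_row k (map f [0..<k]) \<longleftrightarrow> (\<forall>j<k. f j \<in> {-1, 1})"
  by (simp add: pm1_row_iff_nth)

lemma pm1_row_G_OD: "g \<in> G_OD k \<Longrightarrow> pm1_row k z \<Longrightarrow> pm1_row k (g z)"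
proof (induction g rule: G_OD.induct)
  case (G_perm g \<pi>)
  then have gz: "pm1_row k (g z)" by blast
  show ?case
    unfolding comp_apply coord_perm_def pm1_row_map_upt
    using pm1_row_nth[OF gz] permutes_in_image[OF G_perm.hyps(2)] by simp
next
  case (G_sign g i)
  then show ?case by (auto simp: pm1_row_iff_nth sign_change_def nth_list_update)
next
  case (G_R g i)
  then have gz: "pm1_row k (g z)" by blast
  have "(if j = i then g z ! i else g z ! j * g z ! i) \<in> {-1, 1}" if "j < k" for j
    using pm1_row_nth[OF gz that] pm1_row_nth[OF gz G_R.hyps(2)] by auto
  then show ?case unfolding comp_apply R_map_def pm1_row_map_upt by blast
qed simp

lemma pm1_array_map_G_OD: "g \<in> G_OD k \<Longrightarrow> pm1_array N k X \<Longrightarrow> pm1_array N k (map g X)"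
  by (auto simp: pm1_array_iff pm1_row_G_OD)

lemma G_OD_comp: "g \<in> G_OD k \<Longrightarrow> h \<in> G_OD k \<Longrightarrow> g \<circ> h \<in> G_OD k"
  by (induction g rule: G_OD.induct) (auto simp: comp_assoc intro: G_OD.intros)

lemma sign_flips_in_G_OD:
  assumes "finite M" "M \<subseteq> {..<k}"
  shows "\<exists>g\<in>G_OD k. \<forall>z. length z = k \<longrightarrow>
           g z = map (\<lambda>j. if j \<in> M then - z ! j else z ! j) [0..<k]"
  using assms
proof (induction M rule: finite_induct)
  case empty
  have "id z = map (\<lambda>j. if j \<in> {} then - z ! j else z ! j) [0..<k]"
    if "length z = k" for z :: "int list"
    using that map_nth[of z] by simp
  with G_OD.G_id show ?case by blast
next
  case (insert m M)
  then obtain g where g: "g \<in> G_OD k"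
    and g_eq: "\<And>z. length z = k \<Longrightarrow> g z = map (\<lambda>j. if j \<in> M then - z ! j else z ! j) [0..<k]"
    by blast
  have m: "m < k" using insert.prems by simp
  have "sign_change m (g z) = map (\<lambda>j. if j \<in> insert m M then - z ! j else z ! j) [0..<k]"
    if "length z = k" for z
  proof (rule nth_equalityI)
    fix j assume "j < length (sign_change m (g z))"
    then have "j < k" using g_eq[OF that] by (simp add: sign_change_def)
    then show "sign_change m (g z) ! j = map (\<lambda>j. if j \<in> insert m M then - z ! j else z ! j) [0..<k] ! j"
      using g_eq[OF that] m insert.hyps(2) by (cases "j = m") (simp_all add: sign_change_def)
  qed (simp add: g_eq[OF that] sign_change_def)
  with G_OD.G_sign[OF g m] show ?case by (intro bexI[of _ "sign_change m \<circ> g"]) simp_all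
qed

lemma signed_coord_perm_in_G_OD:
  assumes \<pi>: "\<pi> permutes {..<k}" and s: "\<forall>j<k. s j \<in> {-1, 1::int}"
  shows "\<exists>g\<in>G_OD k. \<forall>z. length z = k \<longrightarrow> g z = map (\<lambda>j. s j * z ! \<pi> j) [0..<k]"
proof -
  define M where "M = {m. m < k \<and> s (inv \<pi> m) = -1}"
  have "finite M" "M \<subseteq> {..<k}" by (auto simp: M_def)
  then obtain g where g: "g \<in> G_OD k"
    and g_eq: "\<And>z. length z = k \<Longrightarrow> g z = map (\<lambda>m. if m \<in> M then - z ! m else z ! m) [0..<k]"
    using sign_flips_in_G_OD by blast
  have "coord_perm k \<pi> (g z) = map (\<lambda>j. s j * z ! \<pi> j) [0..<k]" if "length z = k" for z
  proof (rule nth_equalityI)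
    fix j assume "j < length (coord_perm k \<pi> (g z))"
    then have j: "j < k" by (simp add: coord_perm_def)
    then have "\<pi> j < k" using permutes_in_image[OF \<pi>] by simp
    moreover have "\<pi> j \<in> M \<longleftrightarrow> s j = -1"
      using \<open>\<pi> j < k\<close> permutes_inverses[OF \<pi>] by (simp add: M_def)
    moreover have "s j = -1 \<or> s j = 1" using s j by simp
    ultimately show "coord_perm k \<pi> (g z) ! j = map (\<lambda>j. s j * z ! \<pi> j) [0..<k] ! j"
      using g_eq[OF that] j by (auto simp: coord_perm_def)
  qed (simp add: coord_perm_def)
  with G_OD.G_perm[OF g \<pi>] show ?thesis by (intro bexI[of _ "coord_perm k \<pi> \<circ> g"]) simp_all
qed

lemma hadamard_equiv_sym:
  assumes "hadamard_equiv N K Y1 Y2"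
  shows "hadamard_equiv N K Y2 Y1"
proof -
  obtain \<sigma> \<tau> a b where \<sigma>: "\<sigma> permutes {..<N}" and \<tau>: "\<tau> permutes {..<K}"
    and a: "\<forall>i<N. a i \<in> {-1, 1}" and b: "\<forall>j<K. b j \<in> {-1, 1}"
    and eq: "\<forall>i<N. \<forall>j<K. Y2 ! i ! j = a (\<sigma> i) * Y1 ! (\<sigma> i) ! (\<tau> j) * b (\<tau> j)"
    using assms unfolding hadamard_equiv_def by blast
  show ?thesis unfolding hadamard_equiv_def
  proof (intro exI conjI allI impI)
    show "inv \<sigma> permutes {..<N}" "inv \<tau> permutes {..<K}"
      using \<sigma> \<tau> by (simp_all add: permutes_inv)
    show "(a \<circ> \<sigma>) i \<in> {-1, 1}" if "i < N" for i
      using a that permutes_in_image[OF \<sigma>] by simp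
    show "(b \<circ> \<tau>) j \<in> {-1, 1}" if "j < K" for j
      using b that permutes_in_image[OF \<tau>] by simp
    fix i j assume i: "i < N" and j: "j < K"
    have "inv \<sigma> i < N" "inv \<tau> j < K"
      using i j permutes_in_image[OF permutes_inv[OF \<sigma>]] permutes_in_image[OF permutes_inv[OF \<tau>]]
      by simp_all
    then have "Y2 ! inv \<sigma> i ! inv \<tau> j = a i * Y1 ! i ! j * b j"
      using eq permutes_inverses[OF \<sigma>] permutes_inverses[OF \<tau>] by simp
    moreover have "a i * a i = 1" "b j * b j = 1" using a b i j by auto
    ultimately show "Y1 ! i ! j = (a \<circ> \<sigma>) (inv \<sigma> i) * Y2 ! inv \<sigma> i ! inv \<tau> j * (b \<circ> \<tau>) (inv \<tau> j)"
      using permutes_inverses[OF \<sigma>] permutes_inverses[OF \<tau>] by (simp add: algebra_simps)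
  qed
qed

lemma hadamard_equiv_trans:
  assumes "hadamard_equiv N K Y1 Y2" "hadamard_equiv N K Y2 Y3"
  shows "hadamard_equiv N K Y1 Y3"
proof -
  obtain \<sigma> \<tau> a b where \<sigma>: "\<sigma> permutes {..<N}" and \<tau>: "\<tau> permutes {..<K}"
    and a: "\<forall>i<N. a i \<in> {-1, 1}" and b: "\<forall>j<K. b j \<in> {-1, 1}"
    and eq: "\<forall>i<N. \<forall>j<K. Y2 ! i ! j = a (\<sigma> i) * Y1 ! (\<sigma> i) ! (\<tau> j) * b (\<tau> j)"
    using assms(1) unfolding hadamard_equiv_def by blast
  obtain \<sigma>' \<tau>' a' b' where \<sigma>': "\<sigma>' permutes {..<N}" and \<tau>': "\<tau>' permutes {..<K}"
    and a': "\<forall>i<N. a' i \<in> {-1, 1}" and b': "\<forall>j<K. b' j \<in> {-1, 1}"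
    and eq': "\<forall>i<N. \<forall>j<K. Y3 ! i ! j = a' (\<sigma>' i) * Y2 ! (\<sigma>' i) ! (\<tau>' j) * b' (\<tau>' j)"
    using assms(2) unfolding hadamard_equiv_def by blast
  show ?thesis unfolding hadamard_equiv_def
  proof (intro exI conjI allI impI)
    show "\<sigma> \<circ> \<sigma>' permutes {..<N}" "\<tau> \<circ> \<tau>' permutes {..<K}"
      using permutes_compose \<sigma> \<sigma>' \<tau> \<tau>' by blast+
    show "(\<lambda>i. a' (inv \<sigma> i) * a i) i \<in> {-1, 1}" if "i < N" for i
    proof -
      have "a' (inv \<sigma> i) \<in> {-1, 1}" "a i \<in> {-1, 1}"
        using a a' that permutes_in_image[OF permutes_inv[OF \<sigma>]] by simp_all
      then show ?thesis by auto
    qed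
    show "(\<lambda>j. b j * b' (inv \<tau> j)) j \<in> {-1, 1}" if "j < K" for j
    proof -
      have "b' (inv \<tau> j) \<in> {-1, 1}" "b j \<in> {-1, 1}"
        using b b' that permutes_in_image[OF permutes_inv[OF \<tau>]] by simp_all
      then show ?thesis by auto
    qed
    fix i j assume i: "i < N" and j: "j < K"
    then have "\<sigma>' i < N" "\<tau>' j < K"
      using permutes_in_image[OF \<sigma>'] permutes_in_image[OF \<tau>'] by simp_all
    then show "Y3 ! i ! j = (\<lambda>i. a' (inv \<sigma> i) * a i) ((\<sigma> \<circ> \<sigma>') i) * Y1 ! (\<sigma> \<circ> \<sigma>') i ! (\<tau> \<circ> \<tau>') j
               * (\<lambda>j. b j * b' (inv \<tau> j)) ((\<tau> \<circ> \<tau>') j)"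
      using eq' i j eq permutes_inverses[OF \<sigma>] permutes_inverses[OF \<tau>] by (simp add: algebra_simps)
  qed
qed

lemma OD_equiv_sym: "OD_equiv N k X Y \<Longrightarrow> OD_equiv N k Y X"
  unfolding OD_equiv_def by (rule hadamard_equiv_sym)

lemma OD_equiv_trans: "OD_equiv N k X Y \<Longrightarrow> OD_equiv N k Y Z \<Longrightarrow> OD_equiv N k X Z"
  unfolding OD_equiv_def by (rule hadamard_equiv_trans)

lemma OD_equiv_if_mset_eq:
  assumes "mset X = mset Z" "length Z = N"
  shows "OD_equiv N k Z X"
proof -
  obtain \<sigma> where \<sigma>: "\<sigma> permutes {..<length Z}" and X: "X = permute_list \<sigma> Z"
    using mset_eq_permutation[OF assms(1)] by metis
  show ?thesis unfolding OD_equiv_def hadamard_equiv_def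
  proof (intro exI conjI allI impI)
    show "\<sigma> permutes {..<N}" using \<sigma> assms(2) by simp
    fix i j assume "i < N"
    then show "map ((#) 1) X ! i ! j = 1 * map ((#) 1) Z ! \<sigma> i ! id j * 1"
      using X assms(2) permutes_in_image[OF \<sigma>] permute_list_nth[OF \<sigma>] by simp
  qed (simp_all flip: id_def)
qed

lemma OD_equiv_map_if_columnwise:
  assumes Z: "pm1_array N k Z" and \<tau>: "\<tau> permutes {..<Suc k}" and b: "\<forall>j<Suc k. b j \<in> {-1, 1::int}"
    and \<alpha>: "\<And>z. pm1_row k z \<Longrightarrow> \<alpha> z \<in> {-1, 1::int}"
    and f: "\<And>z j. pm1_row k z \<Longrightarrow> j < Suc k \<Longrightarrow> (1 # f z) ! j = \<alpha> z * (1 # z) ! \<tau> j * b (\<tau> j)"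
  shows "OD_equiv N k Z (map f Z)"
  unfolding OD_equiv_def hadamard_equiv_def
proof (rule exI[of _ id], rule exI[of _ \<tau>], rule exI[of _ "\<lambda>i. \<alpha> (Z ! i)"], rule exI[of _ b],
    intro conjI allI impI)
  have lZ: "length Z = N" using Z by (simp add: pm1_array_iff)
  show "id permutes {..<N}" "\<tau> permutes {..<Suc k}" using \<tau> by simp_all
  show "b j \<in> {-1, 1}" if "j < Suc k" for j using b that by blast
  show "\<alpha> (Z ! i) \<in> {-1, 1}" if "i < N" for i using \<alpha>[OF pm1_array_nth[OF Z that]] .
  fix i j assume i: "i < N" and j: "j < Suc k"
  have "map ((#) 1) (map f Z) ! i = 1 # f (Z ! i)" "map ((#) 1) Z ! id i = 1 # Z ! i"
    using i lZ by simp_all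
  then show "map ((#) 1) (map f Z) ! i ! j = \<alpha> (Z ! id i) * map ((#) 1) Z ! id i ! \<tau> j * b (\<tau> j)"
    using f[OF pm1_array_nth[OF Z i] j] by simp
qed

lemma permutes_case_nat_Suc:
  assumes "\<pi> permutes {..<k}"
  shows "case_nat 0 (Suc \<circ> \<pi>) permutes {..<Suc k}"
proof (rule inj_imp_permutes)
  show "inj_on (case_nat 0 (Suc \<circ> \<pi>)) {..<Suc k}"
  proof (rule inj_onI)
    fix i j assume "case_nat 0 (Suc \<circ> \<pi>) i = case_nat 0 (Suc \<circ> \<pi>) j"
    then show "i = j" using permutes_inj[OF assms] by (cases i; cases j) (auto dest: injD)
  qed
  show "case_nat 0 (Suc \<circ> \<pi>) j \<in> {..<Suc k}" if "j \<in> {..<Suc k}" for j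
    using that permutes_in_image[OF assms] by (cases j) auto
  show "case_nat 0 (Suc \<circ> \<pi>) j = j" if "j \<notin> {..<Suc k}" for j
    using that permutes_not_in[OF assms] by (cases j) auto
qed simp

lemma OD_equiv_map_coord_perm:
  assumes "pm1_array N k Z" "\<pi> permutes {..<k}"
  shows "OD_equiv N k Z (map (coord_perm k \<pi>) Z)"
proof (rule OD_equiv_map_if_columnwise[OF assms(1) permutes_case_nat_Suc[OF assms(2)],
      where b = "\<lambda>_. 1" and \<alpha> = "\<lambda>_. 1"])
  fix z :: "int list" and j assume "j < Suc k"
  then show "(1 # coord_perm k \<pi> z) ! j = 1 * (1 # z) ! case_nat 0 (Suc \<circ> \<pi>) j * 1"
    by (cases j) (simp_all add: coord_perm_def)
qed simp_all

lemma OD_equiv_map_sign_change: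
  assumes "pm1_array N k Z" "c < k"
  shows "OD_equiv N k Z (map (sign_change c) Z)"
proof (rule OD_equiv_map_if_columnwise[OF assms(1) permutes_id,
      where b = "\<lambda>j. if j = Suc c then -1 else 1" and \<alpha> = "\<lambda>_. 1"])
  fix z :: "int list" and j assume "pm1_row k z" "j < Suc k"
  then show "(1 # sign_change c z) ! j = 1 * (1 # z) ! id j * (if id j = Suc c then -1 else 1)"
    using assms(2) by (cases j) (auto simp: sign_change_def pm1_row_def nth_list_update)
qed simp_all

(* Since z ! c squares to 1, R_c acts on the augmented row [1, z] as the swap of
   columns 0 and c + 1 followed by the row sign z ! c. *)
lemma Cons_one_R_map_nth:
  assumes "length z = k" "c < k" "z ! c \<in> {-1, 1}" "p < Suc k"
  shows "(1 # z) ! Suc c * (1 # z) ! p = (1 # R_map k c z) ! Transposition.transpose 0 (Suc c) p"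
proof (cases p)
  case (Suc m)
  then show ?thesis
    using assms by (cases "m = c") (auto simp: R_map_def mult.commute)
qed (use assms in \<open>simp add: R_map_def\<close>)

lemma OD_equiv_map_R_map:
  assumes "pm1_array N k Z" "c < k"
  shows "OD_equiv N k Z (map (R_map k c) Z)"
proof (rule OD_equiv_map_if_columnwise[OF assms(1),
      where \<tau> = "Transposition.transpose 0 (Suc c)" and b = "\<lambda>_. 1" and \<alpha> = "\<lambda>z. z ! c"])
  show "Transposition.transpose 0 (Suc c) permutes {..<Suc k}"
    using assms(2) by (intro permutes_swap_id) auto
  show "z ! c \<in> {-1, 1}" if "pm1_row k z" for z using pm1_row_nth[OF that assms(2)] .
  fix z :: "int list" and j assume z: "pm1_row k z" and "j < Suc k"
  then have "Transposition.transpose 0 (Suc c) j < Suc k"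
    using assms(2) by (auto simp: transpose_def)
  from Cons_one_R_map_nth[OF _ assms(2) pm1_row_nth[OF z assms(2)] this] z
  show "(1 # R_map k c z) ! j = z ! c * (1 # z) ! Transposition.transpose 0 (Suc c) j * 1"
    by (simp add: pm1_row_def)
qed simp

lemma OD_equiv_map_G_OD:
  assumes "g \<in> G_OD k" "pm1_array N k Z"
  shows "OD_equiv N k Z (map g Z)"
  using assms
proof (induction g rule: G_OD.induct)
  case G_id
  then show ?case using OD_equiv_if_mset_eq[of Z Z N k] by (simp add: pm1_array_iff)
next
  case (G_perm g \<pi>)
  then show ?case
    using OD_equiv_map_coord_perm[OF pm1_array_map_G_OD[OF G_perm.hyps(1) G_perm.prems] G_perm.hyps(2)]
    by (metis OD_equiv_trans map_map)
next
  case (G_sign g c)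
  then show ?case
    using OD_equiv_map_sign_change[OF pm1_array_map_G_OD[OF G_sign.hyps(1) G_sign.prems] G_sign.hyps(2)]
    by (metis OD_equiv_trans map_map)
next
  case (G_R g c)
  then show ?case
    using OD_equiv_map_R_map[OF pm1_array_map_G_OD[OF G_R.hyps(1) G_R.prems] G_R.hyps(2)]
    by (metis OD_equiv_trans map_map)
qed

lemma permutes_tail:
  assumes q: "q permutes {..<Suc k}" and q0: "q 0 = 0"
  shows "(\<lambda>j. q (Suc j) - 1) permutes {..<k}"
proof (rule inj_imp_permutes)
  have nz: "q (Suc j) \<noteq> 0" for j using q0 permutes_inj[OF q] by (metis injD nat.distinct(1))
  show "inj_on (\<lambda>j. q (Suc j) - 1) {..<k}"
  proof (rule inj_onI)
    fix i j assume "q (Suc i) - 1 = q (Suc j) - 1"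
    then have "q (Suc i) = q (Suc j)" using nz[of i] nz[of j] by linarith
    then show "i = j" using permutes_inj[OF q] by (auto dest: injD)
  qed
  show "q (Suc j) - 1 \<in> {..<k}" if "j \<in> {..<k}" for j
    using that nz[of j] permutes_in_image[OF q, of "Suc j"] by auto
  show "q (Suc j) - 1 = j" if "j \<notin> {..<k}" for j
    using that permutes_not_in[OF q] by auto
qed simp

lemma column_to_front_in_G_OD:
  assumes "c < Suc k"
  shows "\<exists>g\<in>G_OD k. \<forall>z p. pm1_row k z \<longrightarrow> p < Suc k \<longrightarrow>
           (1 # z) ! c * (1 # z) ! p = (1 # g z) ! Transposition.transpose 0 c p"
proof (cases c)
  case 0
  then show ?thesis using G_OD.G_id by (intro bexI[of _ id]) simp_all
next
  case (Suc c')
  then have c': "c' < k" using assms by simp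
  show ?thesis
  proof (intro bexI allI impI)
    show "R_map k c' \<in> G_OD k" using G_OD.G_R[OF G_OD.G_id c'] by simp
    fix z p assume "pm1_row k z" "p < Suc k"
    then show "(1 # z) ! c * (1 # z) ! p = (1 # R_map k c' z) ! Transposition.transpose 0 c p"
      using Cons_one_R_map_nth[of z k c' p] pm1_row_nth[of k z c'] c' Suc by (simp add: pm1_row_def)
  qed
qed

lemma column_perm_fixing_zero_in_G_OD:
  assumes q: "q permutes {..<Suc k}" "q 0 = 0" and s: "\<forall>j<k. s j \<in> {-1, 1::int}"
  shows "\<exists>g\<in>G_OD k. \<forall>z j. length z = k \<longrightarrow> j < k \<longrightarrow> g z ! j = s j * (1 # z) ! q (Suc j)"
proof -
  obtain g where g: "g \<in> G_OD k"
    and g_eq: "\<And>z. length z = k \<Longrightarrow> g z = map (\<lambda>j. s j * z ! (q (Suc j) - 1)) [0..<k]"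
    using signed_coord_perm_in_G_OD[OF permutes_tail[OF q] s] by blast
  have "g z ! j = s j * (1 # z) ! q (Suc j)" if "length z = k" "j < k" for z j
  proof -
    have "q (Suc j) \<noteq> 0" using q permutes_inj[OF q(1)] by (metis injD nat.distinct(1))
    then show ?thesis using g_eq[OF that(1)] that(2) by (cases "q (Suc j)") simp_all
  qed
  with g show ?thesis by blast
qed

lemma G_OD_realises_column_transform:
  assumes \<tau>: "\<tau> permutes {..<Suc k}" and b: "\<forall>j<Suc k. b j \<in> {-1, 1::int}"
  shows "\<exists>g\<in>G_OD k. \<forall>z y \<alpha>. pm1_row k z \<longrightarrow> length y = k \<longrightarrow> \<alpha> \<in> {-1, 1} \<longrightarrow>
           (\<forall>j<Suc k. (1 # y) ! j = \<alpha> * (1 # z) ! \<tau> j * b (\<tau> j)) \<longrightarrow> y = g z"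
proof -
  define c where "c = \<tau> 0"
  have c: "c < Suc k" using permutes_in_image[OF \<tau>] by (simp add: c_def)
  obtain g0 where g0: "g0 \<in> G_OD k" and g0_eq: "\<And>z p. pm1_row k z \<Longrightarrow> p < Suc k \<Longrightarrow>
      (1 # z) ! c * (1 # z) ! p = (1 # g0 z) ! Transposition.transpose 0 c p"
    using column_to_front_in_G_OD[OF c] by blast
  define q where "q = Transposition.transpose 0 c \<circ> \<tau>"
  have q: "q permutes {..<Suc k}" "q 0 = 0"
    using permutes_compose[OF \<tau> permutes_swap_id[of 0 "{..<Suc k}" c]] c by (simp_all add: q_def c_def)
  define s where "s j = b c * b (\<tau> (Suc j))" for j
  have s: "\<forall>j<k. s j \<in> {-1, 1}"
  proof (intro allI impI)
    fix j assume "j < k"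
    then have "b c \<in> {-1, 1}" "b (\<tau> (Suc j)) \<in> {-1, 1}"
      using b c permutes_in_image[OF \<tau>, of "Suc j"] by simp_all
    then show "s j \<in> {-1, 1}" by (auto simp: s_def)
  qed
  obtain g1 where g1: "g1 \<in> G_OD k"
    and g1_eq: "\<And>z j. length z = k \<Longrightarrow> j < k \<Longrightarrow> g1 z ! j = s j * (1 # z) ! q (Suc j)"
    using column_perm_fixing_zero_in_G_OD[OF q s] by blast
  have "y = g1 (g0 z)"
    if z: "pm1_row k z" and y: "length y = k" and \<alpha>: "\<alpha> \<in> {-1, 1}"
      and rows: "\<forall>j<Suc k. (1 # y) ! j = \<alpha> * (1 # z) ! \<tau> j * b (\<tau> j)" for z y \<alpha>
  proof -
    have "1 = \<alpha> * (1 # z) ! c * b c" using rows[rule_format, of 0] by (simp add: c_def)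
    then have \<alpha>_eq: "\<alpha> = (1 # z) ! c * b c"
      using \<alpha> pm1_row_Cons_one_nth[OF z c] b c by auto
    have g0z: "length (g0 z) = k" using pm1_row_G_OD[OF g0 z] by (simp add: pm1_row_def)
    show ?thesis
    proof (rule nth_equalityI)
      fix j assume "j < length y"
      then have j: "j < k" using y by simp
      have "y ! j = \<alpha> * (1 # z) ! \<tau> (Suc j) * b (\<tau> (Suc j))" using rows j by auto
      also have "\<dots> = s j * ((1 # z) ! c * (1 # z) ! \<tau> (Suc j))"
        by (simp add: \<alpha>_eq s_def algebra_simps)
      also have "\<dots> = s j * (1 # g0 z) ! q (Suc j)"
        using g0_eq[OF z] permutes_in_image[OF \<tau>, of "Suc j"] j by (simp add: q_def)
      also have "\<dots> = g1 (g0 z) ! j" using g1_eq[OF g0z j] by simp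
      finally show "y ! j = g1 (g0 z) ! j" .
    qed (use y pm1_row_G_OD[OF g1 pm1_row_G_OD[OF g0 z]] in \<open>simp add: pm1_row_def\<close>)
  qed
  then show ?thesis using G_OD_comp[OF g1 g0] by (metis comp_apply)
qed

lemma G_OD_map_if_OD_equiv:
  assumes X: "pm1_array N k X" and Y: "pm1_array N k Y" and "OD_equiv N k X Y"
  shows "\<exists>g\<in>G_OD k. mset Y = mset (map g X)"
proof -
  obtain \<sigma> \<tau> a b where \<sigma>: "\<sigma> permutes {..<N}" and \<tau>: "\<tau> permutes {..<Suc k}"
    and a: "\<forall>i<N. a i \<in> {-1, 1::int}" and b: "\<forall>j<Suc k. b j \<in> {-1, 1::int}"
    and eq: "\<forall>i<N. \<forall>j<Suc k.
      map ((#) 1) Y ! i ! j = a (\<sigma> i) * map ((#) 1) X ! \<sigma> i ! \<tau> j * b (\<tau> j)"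
    using assms(3) unfolding OD_equiv_def hadamard_equiv_def by blast
  obtain g where g: "g \<in> G_OD k" and g_eq: "\<And>z y \<alpha>. pm1_row k z \<Longrightarrow> length y = k \<Longrightarrow>
      \<alpha> \<in> {-1, 1} \<Longrightarrow> (\<forall>j<Suc k. (1 # y) ! j = \<alpha> * (1 # z) ! \<tau> j * b (\<tau> j)) \<Longrightarrow> y = g z"
    using G_OD_realises_column_transform[OF \<tau> b] by blast
  have lX: "length X = N" and lY: "length Y = N" using X Y by (simp_all add: pm1_array_iff)
  have "Y = map g (permute_list \<sigma> X)"
  proof (rule nth_equalityI)
    fix i assume "i < length Y"
    then have i: "i < N" using lY by simp
    then have \<sigma>i: "\<sigma> i < N" using permutes_in_image[OF \<sigma>] by simp
    have "Y ! i = g (X ! \<sigma> i)"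
    proof (rule g_eq[OF pm1_array_nth[OF X \<sigma>i]])
      show "length (Y ! i) = k" using pm1_array_nth[OF Y i] by (simp add: pm1_row_def)
      show "a (\<sigma> i) \<in> {-1, 1}" using a \<sigma>i by blast
      show "\<forall>j<Suc k. (1 # Y ! i) ! j = a (\<sigma> i) * (1 # X ! \<sigma> i) ! \<tau> j * b (\<tau> j)"
        using eq i \<sigma>i lX lY by simp
    qed
    then show "Y ! i = map g (permute_list \<sigma> X) ! i"
      using i lX \<sigma> by (simp add: permute_list_nth)
  qed (simp add: lX lY)
  then have "mset Y = mset (map g X)"
    using \<sigma> lX by (simp add: mset_permute_list)
  then show ?thesis using g by blast
qed

theorem lemma5:
  fixes N k t1 t2 :: nat and X Y :: "int list list"
  assumes "is_OA N k t1 X" and "is_OA N k t2 Y"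
    and "t1 \<ge> 1" and "t2 \<ge> 1"
  shows "OD_equiv N k X Y \<longleftrightarrow> (\<exists>g\<in>G_OD k. mset X = mset (map g Y))"
proof -
  have X: "pm1_array N k X" and Y: "pm1_array N k Y"
    using assms(1,2) by (simp_all add: is_OA_def)
  show ?thesis
  proof
    assume "OD_equiv N k X Y"
    then show "\<exists>g\<in>G_OD k. mset X = mset (map g Y)"
      using G_OD_map_if_OD_equiv[OF Y X] OD_equiv_sym by blast
  next
    assume "\<exists>g\<in>G_OD k. mset X = mset (map g Y)"
    then obtain g where g: "g \<in> G_OD k" and "mset X = mset (map g Y)" by blast
    then have "OD_equiv N k (map g Y) X"
      using Y OD_equiv_if_mset_eq by (simp add: pm1_array_iff)
    moreover have "OD_equiv N k Y (map g Y)" using OD_equiv_map_G_OD[OF g Y] .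
    ultimately show "OD_equiv N k X Y" using OD_equiv_sym OD_equiv_trans by blast
  qed
qed

end
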